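(* Let $(p_m)$ and $(q_n)$ belong to $SVA_{reg(\alpha)}$ (for some $\alpha\ge0$), and let $(u_{mn})$ be a double sequence of complex numbers that is $(\overline{N},p,q)$ summable to a number $\ell$. If $(u_{mn})$ is slowly oscillating relative to $(P_m)$, slowly oscillating relative to $(Q_n)$, and slowly oscillating relative to $(P_m)$ or relative to $(Q_n)$ in the strong sense, then $(u_{mn})$ is $P$-convergent to $\ell$.
   Context: Weights: $(p_m)_{m\ge0},(q_n)_{n\ge0}$ are sequences of positive reals with $P_m=\sum_{i=0}^m p_i\to\infty$ and $Q_n=\sum_{j=0}^n q_j\to\infty$. $SVA_{reg(\alpha)}$ denotes the set of positive sequences $(p_m)$ whose partial sums have the form $P_m=(m+1)^{\alpha}L(m)$ ($m\ge0$) with a constant $\alpha\ge0$ and a slowly varying function $L$ on $(0,\infty)$, i.e. $L$ positive, measurable, and $L(\lambda t)/L(t)\to1$ as $t\to\infty$ for every $\lambda>0$. The weighted means are $\sigma_{mn}=\frac{1}{P_mQ_n}\sum_{i=0}^m\sum_{j=0}^n p_iq_ju_{ij}$; $(u_{mn})$ is $(\overline{N},p,q)$ summable to $\ell$ if $(\sigma_{mn})$ is $P$-convergent to $\ell$. A double sequence $(a_{mn})$ is $P$-convergent to $\ell$ if for every $\epsilon>0$ there is $n_0$ with $|a_{mn}-\ell|<\epsilon$ whenever $m,n\ge n_0$. For a real double array $(a_{mn})$, $\limsup_{m,n\to\infty}a_{mn}=\lim_{N\to\infty}\sup_{m,n\ge N}a_{mn}$. In the maxima below, $i,j$ range over nonnegative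 integers satisfying the constraints. A complex double sequence $(u_{mn})$ is: - slowly oscillating relative to $(P_m)$ if $\lim_{\lambda\to1^+}\limsup_{m,n\to\infty}\max_{P_m\le P_i\le\lambda P_m}|u_{in}-u_{mn}|=0$; - slowly oscillating relative to $(Q_n)$ if $\lim_{\kappa\to1^+}\limsup_{m,n\to\infty}\max_{Q_n\le Q_j\le\kappa Q_n}|u_{mj}-u_{mn}|=0$; - slowly oscillating relative to $(P_m)$ in the strong sense if $\lim_{\lambda,\kappa\to1^+}\limsup_{m,n\to\infty}\max_{P_m\le P_i\le\lambda P_m,\ Q_n\le Q_j\le\kappa Q_n}|u_{ij}-u_{mj}|=0$; - slowly oscillating relative to $(Q_n)$ in the strong sense if $\lim_{\lambda,\kappa\to1^+}\limsup_{m,n\to\infty}\max_{P_m\le P_i\le\lambda P_m,\ Q_n\le Q_j\le\kappa Q_n}|u_{ij}-u_{in}|=0$. *)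

theory Defs
  imports "HOL-Analysis.Analysis"
begin

definition psum :: "(nat \<Rightarrow> real) \<Rightarrow> nat \<Rightarrow> real" where
  "psum p m = (\<Sum>i\<le>m. p i)"

definition slowly_varying :: "(real \<Rightarrow> real) \<Rightarrow> bool" where
  "slowly_varying L \<longleftrightarrow>
     (\<forall>t>0. L t > 0) \<and> set_borel_measurable borel {0<..} L \<and>
     (\<forall>lam>0. ((\<lambda>t. L (lam * t) / L t) \<longlongrightarrow> 1) at_top)"

definition SVA_reg :: "real \<Rightarrow> (nat \<Rightarrow> real) set" where
  "SVA_reg alpha = {p. (\<forall>m. p m > 0) \<and>
     (\<exists>L. slowly_varying L \<and> (\<forall>m. psum p m = (real m + 1) powr alpha * L (real m)))}"

definition wmean :: "(nat \<Rightarrow> real) \<Rightarrow> (nat \<Rightarrow> real) \<Rightarrow> (nat \<Rightarrow> nat \<Rightarrow> complex) \<Rightarrow> nat \<Rightarrow> nat \<Rightarrow> complex" where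
  "wmean p q u m n = (\<Sum>i\<le>m. \<Sum>j\<le>n. of_real (p i * q j) * u i j) / of_real (psum p m * psum q n)"

definition P_conv :: "(nat \<Rightarrow> nat \<Rightarrow> complex) \<Rightarrow> complex \<Rightarrow> bool" where
  "P_conv a l \<longleftrightarrow> (\<forall>\<epsilon>>0. \<exists>n0. \<forall>m n. m \<ge> n0 \<and> n \<ge> n0 \<longrightarrow> cmod (a m n - l) < \<epsilon>)"

definition Nbar_summable :: "(nat \<Rightarrow> real) \<Rightarrow> (nat \<Rightarrow> real) \<Rightarrow> (nat \<Rightarrow> nat \<Rightarrow> complex) \<Rightarrow> complex \<Rightarrow> bool" where
  "Nbar_summable p q u l \<longleftrightarrow> P_conv (wmean p q u) l"

text \<open>limsup of a real double array: lim_N sup_{m,n >= N} a m n, in the extended reals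
  (the sup is decreasing in N, so the limit is the infimum).\<close>
definition dlimsup :: "(nat \<Rightarrow> nat \<Rightarrow> ereal) \<Rightarrow> ereal" where
  "dlimsup a = (INF N. SUP mn \<in> {mn. fst mn \<ge> N \<and> snd mn \<ge> N}. a (fst mn) (snd mn))"

definition slow_osc_P :: "(nat \<Rightarrow> real) \<Rightarrow> (nat \<Rightarrow> nat \<Rightarrow> complex) \<Rightarrow> bool" where
  "slow_osc_P p u \<longleftrightarrow>
     ((\<lambda>lam. dlimsup (\<lambda>m n. SUP i \<in> {i. psum p m \<le> psum p i \<and> psum p i \<le> lam * psum p m}.
          ereal (cmod (u i n - u m n)))) \<longlongrightarrow> 0) (at_right 1)"

definition slow_osc_Q :: "(nat \<Rightarrow> real) \<Rightarrow> (nat \<Rightarrow> nat \<Rightarrow> complex) \<Rightarrow> bool" where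
  "slow_osc_Q q u \<longleftrightarrow>
     ((\<lambda>kap. dlimsup (\<lambda>m n. SUP j \<in> {j. psum q n \<le> psum q j \<and> psum q j \<le> kap * psum q n}.
          ereal (cmod (u m j - u m n)))) \<longlongrightarrow> 0) (at_right 1)"

definition slow_osc_P_strong :: "(nat \<Rightarrow> real) \<Rightarrow> (nat \<Rightarrow> real) \<Rightarrow> (nat \<Rightarrow> nat \<Rightarrow> complex) \<Rightarrow> bool" where
  "slow_osc_P_strong p q u \<longleftrightarrow>
     ((\<lambda>(lam, kap). dlimsup (\<lambda>m n. SUP ij \<in> {(i, j). psum p m \<le> psum p i \<and> psum p i \<le> lam * psum p m
            \<and> psum q n \<le> psum q j \<and> psum q j \<le> kap * psum q n}.
          ereal (cmod (u (fst ij) (snd ij) - u m (snd ij))))) \<longlongrightarrow> 0) (at_right 1 \<times>\<^sub>F at_right 1)"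

definition slow_osc_Q_strong :: "(nat \<Rightarrow> real) \<Rightarrow> (nat \<Rightarrow> real) \<Rightarrow> (nat \<Rightarrow> nat \<Rightarrow> complex) \<Rightarrow> bool" where
  "slow_osc_Q_strong p q u \<longleftrightarrow>
     ((\<lambda>(lam, kap). dlimsup (\<lambda>m n. SUP ij \<in> {(i, j). psum p m \<le> psum p i \<and> psum p i \<le> lam * psum p m
            \<and> psum q n \<le> psum q j \<and> psum q j \<le> kap * psum q n}.
          ereal (cmod (u (fst ij) (snd ij) - u (fst ij) n)))) \<longlongrightarrow> 0) (at_right 1 \<times>\<^sub>F at_right 1)"

end

theory Submission
  imports Defs
begin

text \<open>For \<open>\<lambda>, \<kappa> > 1\<close> close to 1, slow oscillation in one variable together with strong slow
  oscillation in the other makes \<open>|u\<^sub>m\<^sub>n - u\<^sub>i\<^sub>j|\<close> uniformly small over the windows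
  \<open>P\<^sub>m \<le> P\<^sub>i \<le> \<lambda>P\<^sub>m\<close>, \<open>Q\<^sub>n \<le> Q\<^sub>j \<le> \<kappa>Q\<^sub>n\<close>. Regular variation forces \<open>P\<^sub>m\<^sub>+\<^sub>1 / P\<^sub>m \<rightarrow> 1\<close>, so each
  window contains an index \<open>a\<close> with \<open>P\<^sub>a \<ge> \<mu>P\<^sub>m\<close> for a fixed \<open>1 < \<mu> < \<lambda>\<close>, and likewise \<open>b\<close>.
  Summing \<open>p\<^sub>i q\<^sub>j (u\<^sub>m\<^sub>n - \<ell>)\<close> over the rectangle \<open>m < i \<le> a, n < j \<le> b\<close> gives
  \<open>(P\<^sub>a - P\<^sub>m)(Q\<^sub>b - Q\<^sub>n)(u\<^sub>m\<^sub>n - \<ell>)\<close> as the weighted sum of the small differences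
  \<open>u\<^sub>m\<^sub>n - u\<^sub>i\<^sub>j\<close> plus the four corner terms \<open>\<plusminus>P\<^sub>xQ\<^sub>y(\<sigma>\<^sub>x\<^sub>y - \<ell>)\<close>, which are small by summability;
  since \<open>P\<^sub>a Q\<^sub>b\<close> is at most a constant times \<open>(P\<^sub>a - P\<^sub>m)(Q\<^sub>b - Q\<^sub>n)\<close>, dividing out gives the bound.\<close>

lemma psum_pos: "(\<And>i. 0 < p i) \<Longrightarrow> 0 < psum p m"
  unfolding psum_def by (intro sum_pos) auto

lemma psum_mono: "(\<And>i. 0 < p i) \<Longrightarrow> i \<le> j \<Longrightarrow> psum p i \<le> psum p j"
  unfolding psum_def by (intro sum_mono2) (auto intro: less_imp_le)

lemma psum_less_imp_less: "(\<And>i. 0 < p i) \<Longrightarrow> psum p i < psum p j \<Longrightarrow> i < j"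
  using psum_mono[of p j i] by (cases "i < j") auto

lemma SVA_reg_psum_ratio_tendsto:
  assumes "p \<in> SVA_reg alpha" and "0 < b" and "0 < c"
  shows "(\<lambda>k. psum p (c * k) / psum p (b * k)) \<longlonglongrightarrow> (real c / real b) powr alpha"
proof -
  obtain L where sv: "slowly_varying L" and PL: "\<And>m. psum p m = (real m + 1) powr alpha * L (real m)"
    using assms(1) unfolding SVA_reg_def by auto
  have "filterlim (\<lambda>k::nat. real b * real k) at_top sequentially"
    using assms(2) by (intro filterlim_tendsto_pos_mult_at_top[OF tendsto_const _ filterlim_real_sequentially]) auto
  moreover have "((\<lambda>t. L (real c / real b * t) / L t) \<longlongrightarrow> 1) at_top"
    using sv assms(2,3) unfolding slowly_varying_def by (simp del: times_divide_eq_left)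
  ultimately have L_ratio: "(\<lambda>k. L (real c / real b * (real b * real k)) / L (real b * real k)) \<longlonglongrightarrow> 1"
    by (rule filterlim_compose[rotated])
  have "(\<lambda>k. (real c + inverse (real k)) / (real b + inverse (real k))) \<longlonglongrightarrow> (real c + 0) / (real b + 0)"
    using assms(2) by (intro tendsto_intros lim_inverse_n) auto
  hence "(\<lambda>k. ((real c + inverse (real k)) / (real b + inverse (real k))) powr alpha) \<longlonglongrightarrow> (real c / real b) powr alpha"
    using assms(2,3) by (intro tendsto_powr) auto
  from tendsto_mult[OF this L_ratio] have lim: "(\<lambda>k. ((real c + inverse (real k)) / (real b + inverse (real k))) powr alpha
      * (L (real c / real b * (real b * real k)) / L (real b * real k))) \<longlonglongrightarrow> (real c / real b) powr alpha"
    by simp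
  show ?thesis
  proof (rule Lim_transform_eventually[OF lim], rule eventually_sequentiallyI)
    fix k :: nat assume "1 \<le> k"
    hence k: "0 < real k" by simp
    have "(real c + inverse (real k)) / (real b + inverse (real k)) = (real (c * k) + 1) / (real (b * k) + 1)"
    proof -
      have "(real c + inverse (real k)) / (real b + inverse (real k))
          = (real k * (real c + inverse (real k))) / (real k * (real b + inverse (real k)))"
        using k by simp
      also have "\<dots> = (real (c * k) + 1) / (real (b * k) + 1)"
        using k by (simp add: algebra_simps)
      finally show ?thesis .
    qed
    moreover have "real c / real b * (real b * real k) = real (c * k)"
      using assms(2) by simp
    ultimately show "((real c + inverse (real k)) / (real b + inverse (real k))) powr alpha
      * (L (real c / real b * (real b * real k)) / L (real b * real k)) = psum p (c * k) / psum p (b * k)"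
      by (simp add: PL powr_divide)
  qed
qed

text \<open>Slow variation only controls \<open>L(\<lambda>t)/L(t)\<close> for fixed \<open>\<lambda>\<close>, so the ratio is first taken along the
  progressions \<open>bk\<close> and \<open>(b+1)k\<close> and then sandwiched by monotonicity of \<open>P\<close>. No sign condition on
  \<open>\<alpha>\<close> is needed.\<close>

lemma SVA_reg_psum_Suc_le:
  assumes "p \<in> SVA_reg alpha" and "1 < c"
  shows "\<forall>\<^sub>F m in sequentially. psum p (Suc m) \<le> c * psum p m"
proof -
  have pos: "\<And>i. 0 < p i"
    using assms(1) unfolding SVA_reg_def by auto
  have "(\<lambda>b. (real (Suc b) / real b) powr alpha) \<longlonglongrightarrow> 1 powr alpha"
    by (intro tendsto_powr LIMSEQ_Suc_n_over_n) auto
  hence "\<forall>\<^sub>F b in sequentially. (real (Suc b) / real b) powr alpha < c"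
    using assms(2) by (intro order_tendstoD(2)) auto
  then obtain b where b: "0 < b" "(real (Suc b) / real b) powr alpha < c"
    unfolding eventually_sequentially by (metis le_add2 plus_1_eq_Suc zero_less_Suc)
  have "\<forall>\<^sub>F k in sequentially. psum p (Suc b * k) / psum p (b * k) < c"
    using b by (intro order_tendstoD(2)[OF SVA_reg_psum_ratio_tendsto[OF assms(1)]]) auto
  then obtain K where K: "\<And>k. K \<le> k \<Longrightarrow> psum p (Suc b * k) < c * psum p (b * k)"
    using psum_pos[OF pos] by (auto simp: eventually_sequentially divide_less_eq)
  show ?thesis
  proof (rule eventually_sequentiallyI)
    fix m assume m: "b * (K + b) \<le> m"
    define k where "k = m div b"
    have "K + b \<le> k"
      using div_le_mono[OF m, of b] b(1) by (simp add: k_def)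
    have "m = b * k + m mod b" and "m mod b < b"
      using b(1) by (simp_all add: k_def)
    hence "Suc m \<le> b * k + k"
      using \<open>K + b \<le> k\<close> by linarith
    hence "Suc m \<le> Suc b * k" and "b * k \<le> m"
      by (simp_all add: k_def)
    hence "psum p (Suc m) \<le> psum p (Suc b * k)" and "psum p (b * k) \<le> psum p m"
      by (simp_all add: psum_mono[OF pos])
    moreover have "c * psum p (b * k) \<le> c * psum p m"
      using \<open>psum p (b * k) \<le> psum p m\<close> assms(2) by simp
    ultimately show "psum p (Suc m) \<le> c * psum p m"
      using K[of k] \<open>K + b \<le> k\<close> by linarith
  qed
qed

lemma eventually_exists_in_ratio_window:
  fixes P :: "nat \<Rightarrow> real"
  assumes "mono P" and "\<And>m. 0 \<le> P m" and "filterlim P at_top sequentially"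
    and "\<forall>\<^sub>F m in sequentially. P (Suc m) \<le> lam / mu * P m"
    and "1 \<le> mu" and "mu \<le> lam"
  shows "\<forall>\<^sub>F m in sequentially. \<exists>a\<ge>m. mu * P m \<le> P a \<and> P a \<le> lam * P m"
proof -
  obtain M where M: "\<And>m. M \<le> m \<Longrightarrow> P (Suc m) \<le> lam / mu * P m"
    using assms(4) unfolding eventually_sequentially by blast
  show ?thesis
  proof (rule eventually_sequentiallyI)
    fix m assume "M \<le> m"
    obtain i where i: "lam * P m < P i"
      using assms(3) unfolding filterlim_at_top_dense eventually_sequentially by (meson order_refl)
    define a' where "a' = (LEAST i. lam * P m < P i)"
    have a': "lam * P m < P a'"
      unfolding a'_def by (rule LeastI[of _ i]) (rule i)
    have "m < a'"
    proof (rule ccontr)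
      assume "\<not> m < a'"
      hence "P a' \<le> P m"
        using assms(1) by (simp add: monoD)
      moreover have "P m \<le> lam * P m"
        using assms(2)[of m] assms(5,6) by (simp add: mult_le_cancel_right1)
      ultimately show False
        using a' by linarith
    qed
    then obtain a where a: "a' = Suc a" and "m \<le> a"
      by (cases a') auto
    have "P a \<le> lam * P m"
      using not_less_Least[of a "\<lambda>i. lam * P m < P i"] a by (auto simp: a'_def)
    moreover have "lam * P m < lam / mu * P a"
      using a' a M[of a] \<open>M \<le> m\<close> \<open>m \<le> a\<close> by simp
    hence "mu * P m \<le> P a"
      using assms(5,6) by (simp add: field_simps)
    ultimately show "\<exists>a\<ge>m. mu * P m \<le> P a \<and> P a \<le> lam * P m"
      using \<open>m \<le> a\<close> by blast
  qed
qed

definition psum_window :: "(nat \<Rightarrow> real) \<Rightarrow> real \<Rightarrow> nat \<Rightarrow> nat set" where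
  "psum_window p lam m = {i. psum p m \<le> psum p i \<and> psum p i \<le> lam * psum p m}"

lemma dlimsup_lessD:
  assumes "dlimsup a < ereal e"
  shows "\<exists>N. \<forall>m\<ge>N. \<forall>n\<ge>N. a m n < ereal e"
proof -
  obtain N where N: "(SUP mn \<in> {mn. N \<le> fst mn \<and> N \<le> snd mn}. a (fst mn) (snd mn)) < ereal e"
    using assms unfolding dlimsup_def INF_less_iff by blast
  have "a m n \<le> (SUP mn \<in> {mn. N \<le> fst mn \<and> N \<le> snd mn}. a (fst mn) (snd mn))"
    if "N \<le> m" "N \<le> n" for m n
    using that by (intro SUP_upper2[of "(m, n)"]) auto
  with N show ?thesis
    by (meson order.strict_trans1)
qed

lemma eventually_of_dlimsup_SUP_tendsto_0:
  assumes "((\<lambda>t. dlimsup (\<lambda>m n. SUP x \<in> S t m n. ereal (f m n x))) \<longlongrightarrow> 0) F" and "0 < e"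
  shows "\<forall>\<^sub>F t in F. \<exists>N. \<forall>m\<ge>N. \<forall>n\<ge>N. \<forall>x \<in> S t m n. f m n x < e"
proof -
  have "\<forall>\<^sub>F t in F. dlimsup (\<lambda>m n. SUP x \<in> S t m n. ereal (f m n x)) < ereal e"
    using assms by (intro order_tendstoD(2)) auto
  then show ?thesis
  proof (rule eventually_mono)
    fix t assume "dlimsup (\<lambda>m n. SUP x \<in> S t m n. ereal (f m n x)) < ereal e"
    then obtain N where N: "\<And>m n. N \<le> m \<Longrightarrow> N \<le> n \<Longrightarrow> (SUP x \<in> S t m n. ereal (f m n x)) < ereal e"
      using dlimsup_lessD by blast
    have "f m n x < e" if "N \<le> m" "N \<le> n" "x \<in> S t m n" for m n x
      using order.strict_trans1[OF SUP_upper[OF that(3)] N[OF that(1,2)]] by simp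
    then show "\<exists>N. \<forall>m\<ge>N. \<forall>n\<ge>N. \<forall>x \<in> S t m n. f m n x < e"
      by blast
  qed
qed

lemma slow_osc_P_eventually:
  assumes "slow_osc_P p u" and "0 < e"
  shows "\<forall>\<^sub>F lam in at_right 1. \<exists>N. \<forall>m\<ge>N. \<forall>n\<ge>N. \<forall>i \<in> psum_window p lam m. cmod (u i n - u m n) < e"
  using eventually_of_dlimsup_SUP_tendsto_0[where S="\<lambda>lam m n. psum_window p lam m" and f="\<lambda>m n i. cmod (u i n - u m n)"] assms
  unfolding slow_osc_P_def psum_window_def by simp

lemma slow_osc_Q_eventually:
  assumes "slow_osc_Q q u" and "0 < e"
  shows "\<forall>\<^sub>F kap in at_right 1. \<exists>N. \<forall>m\<ge>N. \<forall>n\<ge>N. \<forall>j \<in> psum_window q kap n. cmod (u m j - u m n) < e"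
  using eventually_of_dlimsup_SUP_tendsto_0[where S="\<lambda>kap m n. psum_window q kap n" and f="\<lambda>m n j. cmod (u m j - u m n)"] assms
  unfolding slow_osc_Q_def psum_window_def by simp

lemma psum_window_Times:
  "{(i, j). psum p m \<le> psum p i \<and> psum p i \<le> lam * psum p m \<and> psum q n \<le> psum q j \<and> psum q j \<le> kap * psum q n}
    = psum_window p lam m \<times> psum_window q kap n"
  by (auto simp: psum_window_def)

lemma slow_osc_P_strong_eventually:
  assumes "slow_osc_P_strong p q u" and "0 < e"
  shows "\<forall>\<^sub>F (lam, kap) in at_right 1 \<times>\<^sub>F at_right 1. \<exists>N. \<forall>m\<ge>N. \<forall>n\<ge>N.
    \<forall>i \<in> psum_window p lam m. \<forall>j \<in> psum_window q kap n. cmod (u i j - u m j) < e"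
  using eventually_of_dlimsup_SUP_tendsto_0[where S="\<lambda>t m n. psum_window p (fst t) m \<times> psum_window q (snd t) n"
      and f="\<lambda>m n ij. cmod (u (fst ij) (snd ij) - u m (snd ij))"] assms
  unfolding slow_osc_P_strong_def psum_window_Times split_beta by simp

lemma slow_osc_Q_strong_eventually:
  assumes "slow_osc_Q_strong p q u" and "0 < e"
  shows "\<forall>\<^sub>F (lam, kap) in at_right 1 \<times>\<^sub>F at_right 1. \<exists>N. \<forall>m\<ge>N. \<forall>n\<ge>N.
    \<forall>i \<in> psum_window p lam m. \<forall>j \<in> psum_window q kap n. cmod (u i j - u i n) < e"
  using eventually_of_dlimsup_SUP_tendsto_0[where S="\<lambda>t m n. psum_window p (fst t) m \<times> psum_window q (snd t) n"
      and f="\<lambda>m n ij. cmod (u (fst ij) (snd ij) - u (fst ij) n)"] assms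
  unfolding slow_osc_Q_strong_def psum_window_Times split_beta by simp

lemma slow_osc_P_strong_eventually_close:
  assumes "slow_osc_P_strong p q u" and "slow_osc_Q q u" and "0 < e"
  shows "\<forall>\<^sub>F (lam, kap) in at_right 1 \<times>\<^sub>F at_right 1. \<exists>N. \<forall>m\<ge>N. \<forall>n\<ge>N.
    \<forall>i \<in> psum_window p lam m. \<forall>j \<in> psum_window q kap n. cmod (u m n - u i j) < e"
proof -
  have "0 < e / 2" and "at_right (1::real) \<noteq> bot"
    using assms(3) by simp_all
  from slow_osc_P_strong_eventually[OF assms(1) \<open>0 < e / 2\<close>]
    eventually_prod2[OF \<open>at_right 1 \<noteq> bot\<close>, THEN iffD2, OF slow_osc_Q_eventually[OF assms(2) \<open>0 < e / 2\<close>]]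
  show ?thesis
  proof (rule eventually_elim2, clarify)
    fix lam kap N1 N2
    assume 1: "\<forall>m\<ge>N1. \<forall>n\<ge>N1. \<forall>i \<in> psum_window p lam m. \<forall>j \<in> psum_window q kap n. cmod (u i j - u m j) < e / 2"
    assume 2: "\<forall>m\<ge>N2. \<forall>n\<ge>N2. \<forall>j \<in> psum_window q kap n. cmod (u m j - u m n) < e / 2"
    show "\<exists>N. \<forall>m\<ge>N. \<forall>n\<ge>N. \<forall>i \<in> psum_window p lam m. \<forall>j \<in> psum_window q kap n. cmod (u m n - u i j) < e"
    proof (intro exI[of _ "max N1 N2"] allI impI ballI)
      fix m n i j
      assume "max N1 N2 \<le> m" "max N1 N2 \<le> n" "i \<in> psum_window p lam m" "j \<in> psum_window q kap n"
      with 1 2 have "cmod (u i j - u m j) < e / 2" "cmod (u m j - u m n) < e / 2"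
        by (meson max.boundedE)+
      then show "cmod (u m n - u i j) < e"
        using norm_triangle_lt[of "u m n - u m j" "u m j - u i j"] by (simp add: norm_minus_commute)
    qed
  qed
qed

lemma slow_osc_Q_strong_eventually_close:
  assumes "slow_osc_Q_strong p q u" and "slow_osc_P p u" and "0 < e"
  shows "\<forall>\<^sub>F (lam, kap) in at_right 1 \<times>\<^sub>F at_right 1. \<exists>N. \<forall>m\<ge>N. \<forall>n\<ge>N.
    \<forall>i \<in> psum_window p lam m. \<forall>j \<in> psum_window q kap n. cmod (u m n - u i j) < e"
proof -
  have "0 < e / 2" and "at_right (1::real) \<noteq> bot"
    using assms(3) by simp_all
  from slow_osc_Q_strong_eventually[OF assms(1) \<open>0 < e / 2\<close>]
    eventually_prod1[OF \<open>at_right 1 \<noteq> bot\<close>, THEN iffD2, OF slow_osc_P_eventually[OF assms(2) \<open>0 < e / 2\<close>]]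
  show ?thesis
  proof (rule eventually_elim2, clarify)
    fix lam kap N1 N2
    assume 1: "\<forall>m\<ge>N1. \<forall>n\<ge>N1. \<forall>i \<in> psum_window p lam m. \<forall>j \<in> psum_window q kap n. cmod (u i j - u i n) < e / 2"
    assume 2: "\<forall>m\<ge>N2. \<forall>n\<ge>N2. \<forall>i \<in> psum_window p lam m. cmod (u i n - u m n) < e / 2"
    show "\<exists>N. \<forall>m\<ge>N. \<forall>n\<ge>N. \<forall>i \<in> psum_window p lam m. \<forall>j \<in> psum_window q kap n. cmod (u m n - u i j) < e"
    proof (intro exI[of _ "max N1 N2"] allI impI ballI)
      fix m n i j
      assume "max N1 N2 \<le> m" "max N1 N2 \<le> n" "i \<in> psum_window p lam m" "j \<in> psum_window q kap n"
      with 1 2 have "cmod (u i j - u i n) < e / 2" "cmod (u i n - u m n) < e / 2"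
        by (meson max.boundedE)+
      then show "cmod (u m n - u i j) < e"
        using norm_triangle_lt[of "u m n - u i n" "u i n - u i j"] by (simp add: norm_minus_commute)
    qed
  qed
qed

lemma uniformly_close_on_windows:
  assumes "slow_osc_P p u" and "slow_osc_Q q u" and "slow_osc_P_strong p q u \<or> slow_osc_Q_strong p q u"
    and "0 < e"
  shows "\<exists>lam>1. \<exists>kap>1. \<exists>N. \<forall>m\<ge>N. \<forall>n\<ge>N.
    \<forall>i \<in> psum_window p lam m. \<forall>j \<in> psum_window q kap n. cmod (u m n - u i j) < e"
proof -
  have "\<forall>\<^sub>F (lam, kap) in at_right 1 \<times>\<^sub>F at_right 1. \<exists>N. \<forall>m\<ge>N. \<forall>n\<ge>N.
    \<forall>i \<in> psum_window p lam m. \<forall>j \<in> psum_window q kap n. cmod (u m n - u i j) < e"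
    using assms slow_osc_P_strong_eventually_close slow_osc_Q_strong_eventually_close by blast
  moreover have "\<forall>\<^sub>F t in at_right (1::real) \<times>\<^sub>F at_right (1::real). 1 < fst t \<and> 1 < snd t"
    using eventually_prodI[of "\<lambda>x. 1 < x" _ "\<lambda>x. 1 < x", OF eventually_at_right_less eventually_at_right_less]
    by simp
  ultimately have "\<exists>t. (1 < fst t \<and> 1 < snd t) \<and> (\<exists>N. \<forall>m\<ge>N. \<forall>n\<ge>N.
    \<forall>i \<in> psum_window p (fst t) m. \<forall>j \<in> psum_window q (snd t) n. cmod (u m n - u i j) < e)"
    by (intro eventually_happens'[OF _ eventually_conj]) (simp_all add: prod_filter_eq_bot case_prod_unfold)
  then show ?thesis
    by blast
qed

lemma SVA_reg_eventually_exists_in_window: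
  assumes "p \<in> SVA_reg alpha" and "filterlim (psum p) at_top sequentially" and "1 < mu" and "mu < lam"
  shows "\<forall>\<^sub>F m in sequentially. \<exists>a\<ge>m. mu * psum p m \<le> psum p a \<and> psum p a \<le> lam * psum p m"
proof -
  have pos: "\<And>i. 0 < p i"
    using assms(1) unfolding SVA_reg_def by auto
  have "1 < lam / mu"
    using assms(3,4) by simp
  with assms show ?thesis
    by (intro eventually_exists_in_ratio_window SVA_reg_psum_Suc_le)
      (auto simp: mono_def psum_mono[OF pos] less_imp_le[OF psum_pos[OF pos]])
qed

lemma sum_greaterThanAtMost_eq_diff:
  fixes f :: "nat \<Rightarrow> 'a::ab_group_add"
  assumes "m \<le> a"
  shows "(\<Sum>i\<in>{m<..a}. f i) = (\<Sum>i\<le>a. f i) - (\<Sum>i\<le>m. f i)"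
  using sum.union_disjoint[of "{..m}" "{m<..a}" f] assms by (simp add: ivl_disj_un_one ivl_disj_int_one)

lemma sum_rectangle_eq_diff:
  fixes f :: "nat \<Rightarrow> nat \<Rightarrow> 'a::ab_group_add"
  assumes "m \<le> a" and "n \<le> b"
  shows "(\<Sum>i\<in>{m<..a}. \<Sum>j\<in>{n<..b}. f i j)
    = (\<Sum>i\<le>a. \<Sum>j\<le>b. f i j) - (\<Sum>i\<le>m. \<Sum>j\<le>b. f i j) - (\<Sum>i\<le>a. \<Sum>j\<le>n. f i j) + (\<Sum>i\<le>m. \<Sum>j\<le>n. f i j)"
  using assms by (simp add: sum_greaterThanAtMost_eq_diff sum_subtractf)

lemma psum_mult_psum_mult_wmean_diff:
  assumes "\<And>i. 0 < p i" and "\<And>j. 0 < q j"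
  shows "of_real (psum p x * psum q y) * (wmean p q u x y - l)
    = (\<Sum>i\<le>x. \<Sum>j\<le>y. of_real (p i * q j) * (u i j - l))"
proof -
  have "psum p x * psum q y \<noteq> 0"
    using psum_pos[of p] psum_pos[of q] assms by (simp add: less_imp_neq[symmetric])
  hence "of_real (psum p x * psum q y) * wmean p q u x y = (\<Sum>i\<le>x. \<Sum>j\<le>y. of_real (p i * q j) * u i j)"
    by (simp add: wmean_def)
  moreover have "of_real (psum p x * psum q y) = (\<Sum>i\<le>x. \<Sum>j\<le>y. of_real (p i * q j) :: complex)"
    by (simp add: psum_def sum_product)
  ultimately show ?thesis
    by (simp add: right_diff_distrib sum_subtractf sum_distrib_right)
qed

lemma rectangle_mean_estimate:
  fixes u :: "nat \<Rightarrow> nat \<Rightarrow> complex"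
  assumes pos: "\<And>i. 0 < p i" "\<And>j. 0 < q j" and "m \<le> a" and "n \<le> b"
    and close: "\<And>i j. i \<in> {m<..a} \<Longrightarrow> j \<in> {n<..b} \<Longrightarrow> cmod (u m n - u i j) \<le> E"
    and means: "\<And>x y. x \<in> {m, a} \<Longrightarrow> y \<in> {n, b} \<Longrightarrow> cmod (wmean p q u x y - l) \<le> eta"
  shows "(psum p a - psum p m) * (psum q b - psum q n) * cmod (u m n - l)
    \<le> (psum p a - psum p m) * (psum q b - psum q n) * E + 4 * (psum p a * psum q b) * eta"
proof -
  have Ppos: "0 < psum p x" and Qpos: "0 < psum q y" for x y
    using psum_pos[of p] psum_pos[of q] pos by auto
  define D where "D = (psum p a - psum p m) * (psum q b - psum q n)"
  define w where "w x y = of_real (psum p x * psum q y) * (wmean p q u x y - l)" for x y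
  let ?R = "\<lambda>f. \<Sum>i\<in>{m<..a}. \<Sum>j\<in>{n<..b}. of_real (p i * q j) * f i j :: complex"
  have D_eq: "D = (\<Sum>i\<in>{m<..a}. \<Sum>j\<in>{n<..b}. p i * q j)"
    using sum_greaterThanAtMost_eq_diff[OF assms(3), of p] sum_greaterThanAtMost_eq_diff[OF assms(4), of q]
    by (simp add: D_def psum_def flip: sum_product)
  have "of_real D * (u m n - l) = ?R (\<lambda>i j. u m n - l)"
    by (simp add: D_eq sum_distrib_right)
  also have "\<dots> = ?R (\<lambda>i j. u m n - u i j) + ?R (\<lambda>i j. u i j - l)"
    by (simp add: algebra_simps flip: sum.distrib)
  also have "?R (\<lambda>i j. u i j - l) = w a b - w m b - w a n + w m n"
    unfolding w_def psum_mult_psum_mult_wmean_diff[OF pos] by (rule sum_rectangle_eq_diff[OF assms(3,4)])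
  finally have decomp: "of_real D * (u m n - l) = ?R (\<lambda>i j. u m n - u i j) + (w a b - w m b - w a n + w m n)" .
  have R_bound: "cmod (?R (\<lambda>i j. u m n - u i j)) \<le> D * E"
  proof -
    have "cmod (?R (\<lambda>i j. u m n - u i j)) \<le> (\<Sum>i\<in>{m<..a}. \<Sum>j\<in>{n<..b}. p i * q j * E)"
      using pos close by (intro sum_norm_le)
        (auto simp: norm_mult abs_mult abs_of_pos less_imp_le intro!: mult_left_mono)
    thus ?thesis
      by (simp add: D_eq sum_distrib_right)
  qed
  have w_bound: "cmod (w x y) \<le> psum p a * psum q b * eta" if "x \<in> {m, a}" "y \<in> {n, b}" for x y
  proof -
    have "psum p x \<le> psum p a" "psum q y \<le> psum q b"
      using that assms(3,4) psum_mono[OF pos(1)] psum_mono[OF pos(2)] by auto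
    hence "psum p x * psum q y \<le> psum p a * psum q b"
      using Ppos Qpos by (intro mult_mono) (auto intro: less_imp_le)
    with means[OF that] show ?thesis
      using Ppos[of x] Qpos[of y] Ppos[of a] Qpos[of b] unfolding w_def
      by (auto simp: norm_mult abs_mult intro!: mult_mono)
  qed
  have "cmod (w a b - w m b - w a n + w m n) \<le> cmod (w a b) + cmod (w m b) + cmod (w a n) + cmod (w m n)"
    by (smt (verit) norm_triangle_ineq norm_triangle_ineq4)
  also have "\<dots> \<le> 4 * (psum p a * psum q b) * eta"
    using w_bound[of a b] w_bound[of m b] w_bound[of a n] w_bound[of m n] by simp
  finally have W_bound: "cmod (w a b - w m b - w a n + w m n) \<le> 4 * (psum p a * psum q b) * eta" .
  have "0 \<le> D"
    using assms(3,4) psum_mono[of p] psum_mono[of q] pos by (simp add: D_def)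
  hence "D * cmod (u m n - l) = cmod (of_real D * (u m n - l))"
    by (simp add: norm_mult)
  also have "\<dots> \<le> D * E + 4 * (psum p a * psum q b) * eta"
    using R_bound W_bound unfolding decomp by (smt (verit) norm_triangle_ineq)
  finally show ?thesis
    by (simp add: D_def)
qed

lemma mult_le_imp_le_ratio_mult_diff:
  fixes mu x y :: real
  assumes "1 < mu" and "mu * x \<le> y"
  shows "y \<le> mu / (mu - 1) * (y - x)"
  using assms by (simp add: field_simps)

lemma window_estimate:
  fixes u :: "nat \<Rightarrow> nat \<Rightarrow> complex"
  assumes pos: "\<And>i. 0 < p i" "\<And>j. 0 < q j" and "1 < mu" and "1 < nu"
    and a: "mu * psum p m \<le> psum p a" "psum p a \<le> lam * psum p m"
    and b: "nu * psum q n \<le> psum q b" "psum q b \<le> kap * psum q n"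
    and close: "\<forall>i \<in> psum_window p lam m. \<forall>j \<in> psum_window q kap n. cmod (u m n - u i j) \<le> E"
    and means: "\<And>x y. x \<in> {m, a} \<Longrightarrow> y \<in> {n, b} \<Longrightarrow> cmod (wmean p q u x y - l) \<le> eta"
  shows "cmod (u m n - l) \<le> E + 4 * (mu / (mu - 1)) * (nu / (nu - 1)) * eta"
proof -
  define A where "A = psum p a - psum p m"
  define B where "B = psum q b - psum q n"
  have "psum p m < mu * psum p m" and "psum q n < nu * psum q n"
    using assms(3,4) psum_pos[of p m] psum_pos[of q n] pos by simp_all
  hence "psum p m < psum p a" and "psum q n < psum q b"
    using a(1) b(1) by linarith+
  hence "m \<le> a" and "n \<le> b" and AB: "0 < A" "0 < B"
    using psum_less_imp_less[of p m a] psum_less_imp_less[of q n b] pos by (simp_all add: A_def B_def)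
  have "0 \<le> eta"
    using means[of m n] norm_ge_zero order_trans by blast
  have "cmod (u m n - u i j) \<le> E" if "i \<in> {m<..a}" "j \<in> {n<..b}" for i j
  proof -
    have "i \<in> psum_window p lam m" "j \<in> psum_window q kap n"
      using that a(2) b(2) psum_mono[of p] psum_mono[of q] pos by (force simp: psum_window_def)+
    with close show ?thesis
      by blast
  qed
  note rectangle = rectangle_mean_estimate[OF pos \<open>m \<le> a\<close> \<open>n \<le> b\<close> this means]
  have "psum p a * psum q b \<le> (mu / (mu - 1) * A) * (nu / (nu - 1) * B)"
    using mult_le_imp_le_ratio_mult_diff[OF assms(3) a(1)] mult_le_imp_le_ratio_mult_diff[OF assms(4) b(1)]
      psum_pos[of p a] psum_pos[of q b] pos unfolding A_def B_def by (intro mult_mono) auto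
  with \<open>0 \<le> eta\<close> have "4 * (psum p a * psum q b) * eta \<le> 4 * ((mu / (mu - 1) * A) * (nu / (nu - 1) * B)) * eta"
    by (intro mult_right_mono) auto
  also have "\<dots> = A * B * (4 * (mu / (mu - 1)) * (nu / (nu - 1)) * eta)"
    by (simp only: mult_ac)
  finally have "4 * (psum p a * psum q b) * eta \<le> A * B * (4 * (mu / (mu - 1)) * (nu / (nu - 1)) * eta)" .
  with rectangle have "A * B * cmod (u m n - l) \<le> A * B * (E + 4 * (mu / (mu - 1)) * (nu / (nu - 1)) * eta)"
    unfolding A_def[symmetric] B_def[symmetric] by (simp add: algebra_simps)
  with AB show ?thesis
    by (simp add: mult_le_cancel_left_pos)
qed

lemma Nbar_summable_eventually_window_bound:
  fixes u :: "nat \<Rightarrow> nat \<Rightarrow> complex"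
  assumes pos: "\<And>i. 0 < p i" "\<And>j. 0 < q j" and "1 < mu" and "1 < nu"
    and p_windows: "\<forall>\<^sub>F m in sequentially. \<exists>a\<ge>m. mu * psum p m \<le> psum p a \<and> psum p a \<le> lam * psum p m"
    and q_windows: "\<forall>\<^sub>F n in sequentially. \<exists>b\<ge>n. nu * psum q n \<le> psum q b \<and> psum q b \<le> kap * psum q n"
    and close: "\<forall>m\<ge>N. \<forall>n\<ge>N. \<forall>i \<in> psum_window p lam m. \<forall>j \<in> psum_window q kap n. cmod (u m n - u i j) \<le> E"
    and "Nbar_summable p q u l" and "0 < eta"
  shows "\<exists>n0. \<forall>m\<ge>n0. \<forall>n\<ge>n0. cmod (u m n - l) \<le> E + 4 * (mu / (mu - 1)) * (nu / (nu - 1)) * eta"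
proof -
  obtain N' where means: "\<And>x y. N' \<le> x \<Longrightarrow> N' \<le> y \<Longrightarrow> cmod (wmean p q u x y - l) < eta"
    using assms(8,9) unfolding Nbar_summable_def P_conv_def by blast
  obtain M where windows: "\<And>m. M \<le> m \<Longrightarrow> (\<exists>a\<ge>m. mu * psum p m \<le> psum p a \<and> psum p a \<le> lam * psum p m)
      \<and> (\<exists>b\<ge>m. nu * psum q m \<le> psum q b \<and> psum q b \<le> kap * psum q m)"
    using eventually_conj[OF p_windows q_windows] unfolding eventually_sequentially by blast
  show ?thesis
  proof (intro exI[of _ "max N (max N' M)"] allI impI)
    fix m n
    assume "max N (max N' M) \<le> m" and "max N (max N' M) \<le> n"
    moreover obtain a b where "m \<le> a" and a: "mu * psum p m \<le> psum p a" "psum p a \<le> lam * psum p m"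
      and "n \<le> b" and b: "nu * psum q n \<le> psum q b" "psum q b \<le> kap * psum q n"
      using windows[of m] windows[of n] calculation by auto
    ultimately show "cmod (u m n - l) \<le> E + 4 * (mu / (mu - 1)) * (nu / (nu - 1)) * eta"
      using close means by (intro window_estimate[OF pos assms(3,4) a b]) (auto intro: less_imp_le)
  qed
qed

theorem theorem5p1:
  fixes p q :: "nat \<Rightarrow> real" and u :: "nat \<Rightarrow> nat \<Rightarrow> complex" and l :: complex and alpha :: real
  assumes "alpha \<ge> 0"
    and "p \<in> SVA_reg alpha" and "q \<in> SVA_reg alpha"
    and "filterlim (psum p) at_top sequentially" and "filterlim (psum q) at_top sequentially"
    and "Nbar_summable p q u l"
    and "slow_osc_P p u" and "slow_osc_Q q u"
    and "slow_osc_P_strong p q u \<or> slow_osc_Q_strong p q u"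
  shows "P_conv u l"
  unfolding P_conv_def
proof (intro allI impI)
  fix e :: real
  assume "0 < e"
  obtain lam kap N where "1 < lam" "1 < kap" and close: "\<forall>m\<ge>N. \<forall>n\<ge>N.
      \<forall>i \<in> psum_window p lam m. \<forall>j \<in> psum_window q kap n. cmod (u m n - u i j) \<le> e / 2"
    using uniformly_close_on_windows[OF assms(7-9) half_gt_zero[OF \<open>0 < e\<close>]] by (meson less_imp_le)
  define mu where "mu = (1 + lam) / 2"
  define nu where "nu = (1 + kap) / 2"
  have mu: "1 < mu" "mu < lam" and nu: "1 < nu" "nu < kap"
    using \<open>1 < lam\<close> \<open>1 < kap\<close> by (simp_all add: mu_def nu_def)
  define C where "C = 4 * (mu / (mu - 1)) * (nu / (nu - 1))"
  define eta where "eta = e / (4 * C)"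
  have "0 < C" and "0 < eta"
    using mu nu \<open>0 < e\<close> by (simp_all add: C_def eta_def)
  have pos: "\<And>i. 0 < p i" "\<And>j. 0 < q j"
    using assms(2,3) unfolding SVA_reg_def by auto
  have "\<exists>n0. \<forall>m\<ge>n0. \<forall>n\<ge>n0. cmod (u m n - l) \<le> e / 2 + C * eta"
    unfolding C_def
    by (rule Nbar_summable_eventually_window_bound[OF pos mu(1) nu(1)
          SVA_reg_eventually_exists_in_window[OF assms(2,4) mu] SVA_reg_eventually_exists_in_window[OF assms(3,5) nu]
          close assms(6) \<open>0 < eta\<close>])
  moreover have "e / 2 + C * eta < e"
    using \<open>0 < e\<close> \<open>0 < C\<close> by (simp add: eta_def)
  ultimately show "\<exists>n0. \<forall>m n. n0 \<le> m \<and> n0 \<le> n \<longrightarrow> cmod (u m n - l) < e"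
    by (meson order.strict_trans1)
qed

end
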